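(* Let $(\mathscr C,A,\psi)$ be an entwining structure with $A$ finite dimensional over $K$ such that there exists a normalized cointegral $\gamma=\{\gamma_{X}:A^*\otimes\mathscr C(X,X)\longrightarrow A\}_{X\in Ob(\mathscr C)}$. Then a morphism $\phi:\mathcal M\longrightarrow\mathcal M'$ in ${_A^{\mathscr C}}Ctr(\psi)$ has a section (resp. a retraction) in ${_A^{\mathscr C}}Ctr(\psi)$ if and only if it has a section (resp. a retraction) in ${^{\mathscr C}}Ctr$.
   Context: $K$ is a field, $(U',U):=Hom_K(U',U)$. $\mathscr C$ is a coalgebra with several objects ($\delta_{XYZ}:\mathscr C(X,Z)\to\mathscr C(Y,Z)\otimes\mathscr C(X,Y)$, counits $\epsilon_X$). $(\mathscr C,A,\psi)$ is an entwining structure: $A$ a $K$-algebra with multiplication $\mu_A$ and unit $u_A$, $\psi_{XY}:\mathscr C(X,Y)\otimes A\to A\otimes\mathscr C(X,Y)$, $f\otimes a\mapsto a_\psi\otimes f^\psi$, with $a_\psi\otimes\delta_{XYZ}(f^\psi)=a_{\psi\psi}\otimes f_{Y1}^\psi\otimes f_{Y2}^\psi$, $(ab)_\psi\otimes f^\psi=a_\psi b_\psi\otimes f^{\psi\psi}$, $\psi(f\otimes1)=1\otimes f$, $a_\psi\epsilon_Z(g^\psi)=\epsilon_Z(g)a$. ${^\mathscr C}Ctr$ is the category of left $\mathscr C$-contramodules ($\pi_{XY}:(\mathscr C(X,Y),\mathcal M(Y))\to\mathcal M(X)$, coassociative and counital) and ${_A^{\mathscr C}}Ctr(\psi)$ the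 category of entwined contramodules (contramodules with left $A$-module structures $\mu_X:\mathcal M(X)\to(A,\mathcal M(X))$ satisfying $\mu_X\circ\pi_{XY}=(A,\pi_{XY})\circ(\psi_{XY},\mathcal M(Y))\circ(\mathscr C(X,Y),\mu_Y)$, morphisms objectwise $A$-linear). $coev_A:K\to A\otimes A^*$, $1\mapsto\sum_i a_i\otimes a_i^*$ for a basis $\{a_i\}$ with dual basis $\{a_i^*\}$. A normalized cointegral is a family of linear maps $\gamma_X:A^*\otimes\mathscr C(X,X)\to A$ with: (1) $(A\otimes\psi_{XY})\circ(\psi_{XY}\otimes\gamma_X)\circ(\mathscr C(X,Y)\otimes coev_A\otimes\mathscr C(X,X))\circ\delta_{XXY}=(A\otimes\gamma_Y\otimes\mathscr C(X,Y))\circ(coev_A\otimes\delta_{XYY})$; (2) $(A\otimes\mu_A)\circ(A\otimes\gamma_X\otimes A)\circ(coev_A\otimes\mathscr C(X,X)\otimes A)=(\mu_A\otimes\gamma_X)\circ(A\otimes coev_A\otimes\mathscr C(X,X))\circ\psi_{XX}$; (3) $\mu_A\circ(A\otimes\gamma_X)\circ(coev_A\otimes\mathscr C(X,X))=u_A\circ\epsilon_X$. *)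

theory Defs
  imports Complex_Main "HOL-Library.Function_Algebras"
begin

text \<open>A K-vector space is a subspace U of an ambient type carrying a scalar
multiplication s (library locale vector_space). Hom_K(U,V) is represented by
functions that are K-linear on U, map U into V and are zero outside U
(so that each linear map has a unique representative).\<close>

definition lin_on ::
  "('k::field \<Rightarrow> 'u::ab_group_add \<Rightarrow> 'u) \<Rightarrow> ('k \<Rightarrow> 'v::ab_group_add \<Rightarrow> 'v)
   \<Rightarrow> 'u set \<Rightarrow> 'v set \<Rightarrow> ('u \<Rightarrow> 'v) \<Rightarrow> bool" where
  "lin_on s1 s2 U V f \<longleftrightarrow> (\<forall>x\<in>U. f x \<in> V) \<and> (\<forall>x\<in>U. \<forall>y\<in>U. f (x + y) = f x + f y)
      \<and> (\<forall>c. \<forall>x\<in>U. f (s1 c x) = s2 c (f x))"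

definition LHom ::
  "('k::field \<Rightarrow> 'u::ab_group_add \<Rightarrow> 'u) \<Rightarrow> ('k \<Rightarrow> 'v::ab_group_add \<Rightarrow> 'v)
   \<Rightarrow> 'u set \<Rightarrow> 'v set \<Rightarrow> ('u \<Rightarrow> 'v) set" where
  "LHom s1 s2 U V = {f. lin_on s1 s2 U V f \<and> (\<forall>x. x \<notin> U \<longrightarrow> f x = 0)}"

definition fscale :: "('k \<Rightarrow> 'v \<Rightarrow> 'v) \<Rightarrow> 'k \<Rightarrow> ('u \<Rightarrow> 'v) \<Rightarrow> ('u \<Rightarrow> 'v)" where
  "fscale s c h = (\<lambda>x. s c (h x))"

definition restrict0 :: "'u set \<Rightarrow> ('u \<Rightarrow> 'v::zero) \<Rightarrow> 'u \<Rightarrow> 'v" where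
  "restrict0 U h = (\<lambda>x. if x \<in> U then h x else 0)"

text \<open>An element of U \<otimes> V (resp. U \<otimes> V \<otimes> W) is represented by a finite formal sum,
i.e. a list of pairs (triples) of vectors. Two formal sums represent the same
tensor iff every bilinear (trilinear) functional takes the same value on them
(universal property of the tensor product over a field).\<close>

definition bilin_on ::
  "('k::field \<Rightarrow> 'u::ab_group_add \<Rightarrow> 'u) \<Rightarrow> ('k \<Rightarrow> 'v::ab_group_add \<Rightarrow> 'v)
   \<Rightarrow> 'u set \<Rightarrow> 'v set \<Rightarrow> ('u \<Rightarrow> 'v \<Rightarrow> 'k) \<Rightarrow> bool" where
  "bilin_on s1 s2 U V \<beta> \<longleftrightarrow>
     (\<forall>u\<in>U. lin_on s2 (*) V UNIV (\<beta> u)) \<and> (\<forall>v\<in>V. lin_on s1 (*) U UNIV (\<lambda>u. \<beta> u v))"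

definition trilin_on ::
  "('k::field \<Rightarrow> 'u::ab_group_add \<Rightarrow> 'u) \<Rightarrow> ('k \<Rightarrow> 'v::ab_group_add \<Rightarrow> 'v)
   \<Rightarrow> ('k \<Rightarrow> 'w::ab_group_add \<Rightarrow> 'w)
   \<Rightarrow> 'u set \<Rightarrow> 'v set \<Rightarrow> 'w set \<Rightarrow> ('u \<Rightarrow> 'v \<Rightarrow> 'w \<Rightarrow> 'k) \<Rightarrow> bool" where
  "trilin_on s1 s2 s3 U V W \<tau> \<longleftrightarrow>
     (\<forall>u\<in>U. \<forall>v\<in>V. lin_on s3 (*) W UNIV (\<tau> u v)) \<and>
     (\<forall>u\<in>U. \<forall>w\<in>W. lin_on s2 (*) V UNIV (\<lambda>v. \<tau> u v w)) \<and>
     (\<forall>v\<in>V. \<forall>w\<in>W. lin_on s1 (*) U UNIV (\<lambda>u. \<tau> u v w))"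

definition teq2 ::
  "('k::field \<Rightarrow> 'u::ab_group_add \<Rightarrow> 'u) \<Rightarrow> ('k \<Rightarrow> 'v::ab_group_add \<Rightarrow> 'v)
   \<Rightarrow> 'u set \<Rightarrow> 'v set \<Rightarrow> ('u \<times> 'v) list \<Rightarrow> ('u \<times> 'v) list \<Rightarrow> bool" where
  "teq2 s1 s2 U V xs ys \<longleftrightarrow> set xs \<subseteq> U \<times> V \<and> set ys \<subseteq> U \<times> V \<and>
     (\<forall>\<beta>. bilin_on s1 s2 U V \<beta> \<longrightarrow>
        (\<Sum>(u,v)\<leftarrow>xs. \<beta> u v) = (\<Sum>(u,v)\<leftarrow>ys. \<beta> u v))"

definition teq3 ::
  "('k::field \<Rightarrow> 'u::ab_group_add \<Rightarrow> 'u) \<Rightarrow> ('k \<Rightarrow> 'v::ab_group_add \<Rightarrow> 'v)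
   \<Rightarrow> ('k \<Rightarrow> 'w::ab_group_add \<Rightarrow> 'w)
   \<Rightarrow> 'u set \<Rightarrow> 'v set \<Rightarrow> 'w set \<Rightarrow> ('u \<times> 'v \<times> 'w) list \<Rightarrow> ('u \<times> 'v \<times> 'w) list \<Rightarrow> bool" where
  "teq3 s1 s2 s3 U V W xs ys \<longleftrightarrow> set xs \<subseteq> U \<times> V \<times> W \<and> set ys \<subseteq> U \<times> V \<times> W \<and>
     (\<forall>\<tau>. trilin_on s1 s2 s3 U V W \<tau> \<longrightarrow>
        (\<Sum>(u,v,w)\<leftarrow>xs. \<tau> u v w) = (\<Sum>(u,v,w)\<leftarrow>ys. \<tau> u v w))"

text \<open>a map U \<times> V \<rightarrow> X \<otimes> Y (formal sums) that is bilinear up to equality of tensors,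
i.e. a linear map U \<otimes> V \<rightarrow> X \<otimes> Y\<close>
definition tmap2 ::
  "('k::field \<Rightarrow> 'u::ab_group_add \<Rightarrow> 'u) \<Rightarrow> ('k \<Rightarrow> 'v::ab_group_add \<Rightarrow> 'v)
   \<Rightarrow> ('k \<Rightarrow> 'x::ab_group_add \<Rightarrow> 'x) \<Rightarrow> ('k \<Rightarrow> 'y::ab_group_add \<Rightarrow> 'y)
   \<Rightarrow> 'u set \<Rightarrow> 'v set \<Rightarrow> 'x set \<Rightarrow> 'y set \<Rightarrow> ('u \<Rightarrow> 'v \<Rightarrow> ('x \<times> 'y) list) \<Rightarrow> bool" where
  "tmap2 s1 s2 s3 s4 U V X Y F \<longleftrightarrow>
     (\<forall>u\<in>U. \<forall>v\<in>V. set (F u v) \<subseteq> X \<times> Y) \<and>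
     (\<forall>u\<in>U. \<forall>u'\<in>U. \<forall>v\<in>V. teq2 s3 s4 X Y (F (u + u') v) (F u v @ F u' v)) \<and>
     (\<forall>u\<in>U. \<forall>v\<in>V. \<forall>v'\<in>V. teq2 s3 s4 X Y (F u (v + v')) (F u v @ F u v')) \<and>
     (\<forall>c. \<forall>u\<in>U. \<forall>v\<in>V. teq2 s3 s4 X Y (F (s1 c u) v) (map (\<lambda>(x,y). (s3 c x, y)) (F u v))) \<and>
     (\<forall>c. \<forall>u\<in>U. \<forall>v\<in>V. teq2 s3 s4 X Y (F u (s2 c v)) (map (\<lambda>(x,y). (s3 c x, y)) (F u v)))"

definition tmap1 ::
  "('k::field \<Rightarrow> 'u::ab_group_add \<Rightarrow> 'u)
   \<Rightarrow> ('k \<Rightarrow> 'x::ab_group_add \<Rightarrow> 'x) \<Rightarrow> ('k \<Rightarrow> 'y::ab_group_add \<Rightarrow> 'y)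
   \<Rightarrow> 'u set \<Rightarrow> 'x set \<Rightarrow> 'y set \<Rightarrow> ('u \<Rightarrow> ('x \<times> 'y) list) \<Rightarrow> bool" where
  "tmap1 s1 s3 s4 U X Y F \<longleftrightarrow>
     (\<forall>u\<in>U. set (F u) \<subseteq> X \<times> Y) \<and>
     (\<forall>u\<in>U. \<forall>u'\<in>U. teq2 s3 s4 X Y (F (u + u')) (F u @ F u')) \<and>
     (\<forall>c. \<forall>u\<in>U. teq2 s3 s4 X Y (F (s1 c u)) (map (\<lambda>(x,y). (s3 c x, y)) (F u)))"

text \<open>Objects are the elements of the type 'o; C X Y \<subseteq> 'c is the space \<C>(X,Y);
delta X Y Z : \<C>(X,Z) \<rightarrow> \<C>(Y,Z) \<otimes> \<C>(X,Y); eps X : \<C>(X,X) \<rightarrow> K.\<close>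

definition coalgebra ::
  "('k::field \<Rightarrow> 'c::ab_group_add \<Rightarrow> 'c) \<Rightarrow> ('o \<Rightarrow> 'o \<Rightarrow> 'c set)
   \<Rightarrow> ('o \<Rightarrow> 'o \<Rightarrow> 'o \<Rightarrow> 'c \<Rightarrow> ('c \<times> 'c) list) \<Rightarrow> ('o \<Rightarrow> 'c \<Rightarrow> 'k) \<Rightarrow> bool" where
  "coalgebra sC C delta eps \<longleftrightarrow>
     vector_space sC \<and>
     (\<forall>X Y. module.subspace sC (C X Y)) \<and>
     (\<forall>X Y Z. tmap1 sC sC sC (C X Z) (C Y Z) (C X Y) (delta X Y Z)) \<and>
     (\<forall>X. lin_on sC (*) (C X X) UNIV (eps X)) \<and>
     (\<forall>X Y Z W. \<forall>f\<in>C X W.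
        teq3 sC sC sC (C Z W) (C Y Z) (C X Y)
          [(a, b, c). (g, c) \<leftarrow> delta X Y W f, (a, b) \<leftarrow> delta Y Z W g]
          [(a, b, c). (a, h) \<leftarrow> delta X Z W f, (b, c) \<leftarrow> delta X Y Z h]) \<and>
     (\<forall>X Y. \<forall>f\<in>C X Y. (\<Sum>(f1, f2)\<leftarrow>delta X Y Y f. sC (eps Y f1) f2) = f) \<and>
     (\<forall>X Y. \<forall>f\<in>C X Y. (\<Sum>(f1, f2)\<leftarrow>delta X X Y f. sC (eps X f2) f1) = f)"

text \<open>A K-algebra A is the type 'a (a ring with unit) with a K-vector space structure sA
making the multiplication K-bilinear.\<close>

definition kalgebra :: "('k::field \<Rightarrow> 'a::ring_1 \<Rightarrow> 'a) \<Rightarrow> bool" where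
  "kalgebra sA \<longleftrightarrow> vector_space sA \<and>
     (\<forall>c a b. sA c (a * b) = sA c a * b) \<and> (\<forall>c a b. sA c (a * b) = a * sA c b)"

definition findim :: "('k::field \<Rightarrow> 'a::ab_group_add \<Rightarrow> 'a) \<Rightarrow> bool" where
  "findim sA \<longleftrightarrow> (\<exists>B. finite_dimensional_vector_space sA B)"

text \<open>psi X Y f a is (a formal sum representing) \<psi>_XY(f \<otimes> a) \<in> A \<otimes> \<C>(X,Y).\<close>

definition entwining ::
  "('k::field \<Rightarrow> 'c::ab_group_add \<Rightarrow> 'c) \<Rightarrow> ('o \<Rightarrow> 'o \<Rightarrow> 'c set)
   \<Rightarrow> ('o \<Rightarrow> 'o \<Rightarrow> 'o \<Rightarrow> 'c \<Rightarrow> ('c \<times> 'c) list) \<Rightarrow> ('o \<Rightarrow> 'c \<Rightarrow> 'k)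
   \<Rightarrow> ('k \<Rightarrow> 'a::ring_1 \<Rightarrow> 'a) \<Rightarrow> ('o \<Rightarrow> 'o \<Rightarrow> 'c \<Rightarrow> 'a \<Rightarrow> ('a \<times> 'c) list) \<Rightarrow> bool" where
  "entwining sC C delta eps sA psi \<longleftrightarrow>
     coalgebra sC C delta eps \<and> kalgebra sA \<and>
     (\<forall>X Y. tmap2 sC sA sA sC (C X Y) UNIV UNIV (C X Y) (psi X Y)) \<and>
     (\<forall>X Y Z. \<forall>f\<in>C X Z. \<forall>a.
        teq3 sA sC sC UNIV (C Y Z) (C X Y)
          [(b, g1, g2). (b, g) \<leftarrow> psi X Z f a, (g1, g2) \<leftarrow> delta X Y Z g]
          [(b2, h1, h2). (f1, f2) \<leftarrow> delta X Y Z f, (b1, h2) \<leftarrow> psi X Y f2 a,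
                         (b2, h1) \<leftarrow> psi Y Z f1 b1]) \<and>
     (\<forall>X Y. \<forall>f\<in>C X Y. \<forall>a b.
        teq2 sA sC UNIV (C X Y) (psi X Y f (a * b))
          [(a' * b', f''). (b', f') \<leftarrow> psi X Y f b, (a', f'') \<leftarrow> psi X Y f' a]) \<and>
     (\<forall>X Y. \<forall>f\<in>C X Y. teq2 sA sC UNIV (C X Y) (psi X Y f 1) [(1, f)]) \<and>
     (\<forall>Z. \<forall>g\<in>C Z Z. \<forall>a. (\<Sum>(b, h)\<leftarrow>psi Z Z g a. sA (eps Z h) b) = sA (eps Z g) a)"

definition Adual :: "('k::field \<Rightarrow> 'a::ab_group_add \<Rightarrow> 'a) \<Rightarrow> ('a \<Rightarrow> 'k) set" where
  "Adual sA = {\<alpha>. lin_on sA (*) UNIV UNIV \<alpha>}"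

text \<open>coev_A(1) = \<Sum>_i a_i \<otimes> a_i^* for a (chosen) finite basis {a_i} of A with dual basis
{a_i^*}; as an element of A \<otimes> A^* it does not depend on the choice.\<close>

definition coev :: "('k::field \<Rightarrow> 'a::ab_group_add \<Rightarrow> 'a) \<Rightarrow> ('a \<times> ('a \<Rightarrow> 'k)) list" where
  "coev sA = (let B = (SOME B. finite_dimensional_vector_space sA B);
                  bs = (SOME bs. distinct bs \<and> set bs = B)
              in map (\<lambda>b. (b, \<lambda>v. module.representation sA B v b)) bs)"

text \<open>gamma X \<alpha> f = \<gamma>_X(\<alpha> \<otimes> f)\<close>

definition normalized_cointegral ::
  "('k::field \<Rightarrow> 'c::ab_group_add \<Rightarrow> 'c) \<Rightarrow> ('o \<Rightarrow> 'o \<Rightarrow> 'c set)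
   \<Rightarrow> ('o \<Rightarrow> 'o \<Rightarrow> 'o \<Rightarrow> 'c \<Rightarrow> ('c \<times> 'c) list) \<Rightarrow> ('o \<Rightarrow> 'c \<Rightarrow> 'k)
   \<Rightarrow> ('k \<Rightarrow> 'a::ring_1 \<Rightarrow> 'a) \<Rightarrow> ('o \<Rightarrow> 'o \<Rightarrow> 'c \<Rightarrow> 'a \<Rightarrow> ('a \<times> 'c) list)
   \<Rightarrow> ('o \<Rightarrow> ('a \<Rightarrow> 'k) \<Rightarrow> 'c \<Rightarrow> 'a) \<Rightarrow> bool" where
  "normalized_cointegral sC C delta eps sA psi gamma \<longleftrightarrow>
     (\<forall>X. (\<forall>\<alpha>\<in>Adual sA. lin_on sC sA (C X X) UNIV (gamma X \<alpha>)) \<and>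
          (\<forall>f\<in>C X X. lin_on (fscale (*)) sA (Adual sA) UNIV (\<lambda>\<alpha>. gamma X \<alpha> f))) \<and>
     (\<forall>X Y. \<forall>f\<in>C X Y.
        teq3 sA sA sC UNIV UNIV (C X Y)
          [(b, d, h). (f1, f2) \<leftarrow> delta X X Y f, (ai, ai') \<leftarrow> coev sA,
                      (b, g) \<leftarrow> psi X Y f1 ai, (d, h) \<leftarrow> psi X Y g (gamma X ai' f2)]
          [(ai, gamma Y ai' f1, f2). (ai, ai') \<leftarrow> coev sA, (f1, f2) \<leftarrow> delta X Y Y f]) \<and>
     (\<forall>X. \<forall>f\<in>C X X. \<forall>a.
        teq2 sA sA UNIV UNIV
          [(ai, gamma X ai' f * a). (ai, ai') \<leftarrow> coev sA]
          [(b * ai, gamma X ai' g). (b, g) \<leftarrow> psi X X f a, (ai, ai') \<leftarrow> coev sA]) \<and>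
     (\<forall>X. \<forall>f\<in>C X X. (\<Sum>(ai, ai')\<leftarrow>coev sA. ai * gamma X ai' f) = sA (eps X f) 1)"

text \<open>A left \<C>-contramodule: spaces M X \<subseteq> 'm and structure maps
pr X Y : Hom(\<C>(X,Y), M(Y)) \<rightarrow> M(X).\<close>

definition contramodule ::
  "('k::field \<Rightarrow> 'c::ab_group_add \<Rightarrow> 'c) \<Rightarrow> ('o \<Rightarrow> 'o \<Rightarrow> 'c set)
   \<Rightarrow> ('o \<Rightarrow> 'o \<Rightarrow> 'o \<Rightarrow> 'c \<Rightarrow> ('c \<times> 'c) list) \<Rightarrow> ('o \<Rightarrow> 'c \<Rightarrow> 'k)
   \<Rightarrow> ('k \<Rightarrow> 'm::ab_group_add \<Rightarrow> 'm) \<Rightarrow> ('o \<Rightarrow> 'm set)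
   \<Rightarrow> ('o \<Rightarrow> 'o \<Rightarrow> ('c \<Rightarrow> 'm) \<Rightarrow> 'm) \<Rightarrow> bool" where
  "contramodule sC C delta eps sM M pr \<longleftrightarrow>
     vector_space sM \<and> (\<forall>X. module.subspace sM (M X)) \<and>
     (\<forall>X Y. lin_on (fscale sM) sM (LHom sC sM (C X Y) (M Y)) (M X) (pr X Y)) \<and>
     (\<forall>X Y Z. \<forall>g\<in>LHom sC (fscale sM) (C X Y) (LHom sC sM (C Y Z) (M Z)).
        pr X Y (restrict0 (C X Y) (\<lambda>f. pr Y Z (g f))) =
        pr X Z (restrict0 (C X Z) (\<lambda>f. \<Sum>(f1, f2)\<leftarrow>delta X Y Z f. g f2 f1))) \<and>
     (\<forall>X. \<forall>m\<in>M X. pr X X (restrict0 (C X X) (\<lambda>f. sM (eps X f) m)) = m)"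

definition ctr_morphism ::
  "('k::field \<Rightarrow> 'c::ab_group_add \<Rightarrow> 'c) \<Rightarrow> ('o \<Rightarrow> 'o \<Rightarrow> 'c set)
   \<Rightarrow> ('k \<Rightarrow> 'm::ab_group_add \<Rightarrow> 'm) \<Rightarrow> ('o \<Rightarrow> 'm set) \<Rightarrow> ('o \<Rightarrow> 'o \<Rightarrow> ('c \<Rightarrow> 'm) \<Rightarrow> 'm)
   \<Rightarrow> ('k \<Rightarrow> 'n::ab_group_add \<Rightarrow> 'n) \<Rightarrow> ('o \<Rightarrow> 'n set) \<Rightarrow> ('o \<Rightarrow> 'o \<Rightarrow> ('c \<Rightarrow> 'n) \<Rightarrow> 'n)
   \<Rightarrow> ('o \<Rightarrow> 'm \<Rightarrow> 'n) \<Rightarrow> bool" where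
  "ctr_morphism sC C sM M pr sN N pr' phi \<longleftrightarrow>
     (\<forall>X. phi X \<in> LHom sM sN (M X) (N X)) \<and>
     (\<forall>X Y. \<forall>g\<in>LHom sC sM (C X Y) (M Y).
        phi X (pr X Y g) = pr' X Y (restrict0 (C X Y) (\<lambda>f. phi Y (g f))))"

text \<open>Entwined contramodules: act X a m = \<mu>_X(m)(a).\<close>

definition entwined_contramodule ::
  "('k::field \<Rightarrow> 'c::ab_group_add \<Rightarrow> 'c) \<Rightarrow> ('o \<Rightarrow> 'o \<Rightarrow> 'c set)
   \<Rightarrow> ('o \<Rightarrow> 'o \<Rightarrow> 'o \<Rightarrow> 'c \<Rightarrow> ('c \<times> 'c) list) \<Rightarrow> ('o \<Rightarrow> 'c \<Rightarrow> 'k)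
   \<Rightarrow> ('k \<Rightarrow> 'a::ring_1 \<Rightarrow> 'a) \<Rightarrow> ('o \<Rightarrow> 'o \<Rightarrow> 'c \<Rightarrow> 'a \<Rightarrow> ('a \<times> 'c) list)
   \<Rightarrow> ('k \<Rightarrow> 'm::ab_group_add \<Rightarrow> 'm) \<Rightarrow> ('o \<Rightarrow> 'm set)
   \<Rightarrow> ('o \<Rightarrow> 'o \<Rightarrow> ('c \<Rightarrow> 'm) \<Rightarrow> 'm) \<Rightarrow> ('o \<Rightarrow> 'a \<Rightarrow> 'm \<Rightarrow> 'm) \<Rightarrow> bool" where
  "entwined_contramodule sC C delta eps sA psi sM M pr act \<longleftrightarrow>
     contramodule sC C delta eps sM M pr \<and>
     (\<forall>X. (\<forall>m\<in>M X. lin_on sA sM UNIV (M X) (\<lambda>a. act X a m)) \<and>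
          (\<forall>a. lin_on sM sM (M X) (M X) (act X a)) \<and>
          (\<forall>m\<in>M X. act X 1 m = m) \<and>
          (\<forall>a b. \<forall>m\<in>M X. act X (a * b) m = act X a (act X b m))) \<and>
     (\<forall>X Y. \<forall>g\<in>LHom sC sM (C X Y) (M Y). \<forall>a.
        act X a (pr X Y g) =
        pr X Y (restrict0 (C X Y) (\<lambda>f. \<Sum>(b, h)\<leftarrow>psi X Y f a. act Y b (g h))))"

definition entwined_morphism ::
  "('k::field \<Rightarrow> 'c::ab_group_add \<Rightarrow> 'c) \<Rightarrow> ('o \<Rightarrow> 'o \<Rightarrow> 'c set)
   \<Rightarrow> ('k \<Rightarrow> 'm::ab_group_add \<Rightarrow> 'm) \<Rightarrow> ('o \<Rightarrow> 'm set) \<Rightarrow> ('o \<Rightarrow> 'o \<Rightarrow> ('c \<Rightarrow> 'm) \<Rightarrow> 'm)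
   \<Rightarrow> ('o \<Rightarrow> 'a \<Rightarrow> 'm \<Rightarrow> 'm)
   \<Rightarrow> ('k \<Rightarrow> 'n::ab_group_add \<Rightarrow> 'n) \<Rightarrow> ('o \<Rightarrow> 'n set) \<Rightarrow> ('o \<Rightarrow> 'o \<Rightarrow> ('c \<Rightarrow> 'n) \<Rightarrow> 'n)
   \<Rightarrow> ('o \<Rightarrow> 'a \<Rightarrow> 'n \<Rightarrow> 'n) \<Rightarrow> ('o \<Rightarrow> 'm \<Rightarrow> 'n) \<Rightarrow> bool" where
  "entwined_morphism sC C sM M pr act sN N pr' act' phi \<longleftrightarrow>
     ctr_morphism sC C sM M pr sN N pr' phi \<and>
     (\<forall>X a. \<forall>m\<in>M X. phi X (act X a m) = act' X a (phi X m))"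

end

(* Averaging along the cointegral. Given a contramodule morphism s : N \<rightarrow> M, put
     s'\<^sub>X(n) = \<pi>\<^sub>X\<^sub>X(f \<mapsto> \<Sum>\<^sub>i a\<^sub>i \<cdot> s\<^sub>X(\<gamma>\<^sub>X(a\<^sub>i\<^sup>* \<otimes> f) \<cdot> n)).
   Axiom (2) of the normalized cointegral makes s' A-linear; axiom (1), together with contramodule
   associativity in M and the compatibility of the A-actions with the structure maps, makes s' a
   contramodule morphism; and the normalization (3) combined with the counit axiom shows that, \<phi>
   being A-linear, s' is a section (retraction) of \<phi> whenever s is. The converse implications are
   trivial. *)

theory Submission
  imports Defs
begin

section \<open>Linear maps on subspaces and formal tensors\<close>

lemma sum_list_closed:
  assumes "0 \<in> S" "\<forall>x\<in>S. \<forall>y\<in>S. x + y \<in> S" "\<forall>x\<in>set xs. F x \<in> S"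
  shows "(\<Sum>x\<leftarrow>xs. F x) \<in> S"
  using assms(3) by (induction xs) (auto simp: assms(1,2))

lemma additive_on_sum_list:
  fixes f :: "'a::ab_group_add \<Rightarrow> 'b::ab_group_add"
  assumes "\<forall>x\<in>S. \<forall>y\<in>S. f (x + y) = f x + f y" "0 \<in> S" "\<forall>x\<in>S. \<forall>y\<in>S. x + y \<in> S"
    "\<forall>x\<in>set xs. F x \<in> S"
  shows "f (\<Sum>x\<leftarrow>xs. F x) = (\<Sum>x\<leftarrow>xs. f (F x))"
  using assms(4)
proof (induction xs)
  case Nil
  have "f 0 + 0 = f 0 + f 0" using assms(1,2) by (metis add.right_neutral)
  then show ?case by simp
next
  case (Cons a xs)
  have "(\<Sum>x\<leftarrow>xs. F x) \<in> S" using sum_list_closed[OF assms(2,3)] Cons by auto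
  then show ?case using Cons assms(1) by auto
qed

lemma scale_sum_list:
  assumes "vector_space s"
  shows "s c (\<Sum>x\<leftarrow>xs. F x) = (\<Sum>x\<leftarrow>xs. s c (F x))"
proof -
  interpret module s using assms by (simp add: module_iff_vector_space)
  show ?thesis by (induction xs) (auto simp: scale_right_distrib)
qed

lemma sum_list_swap:
  "(\<Sum>x\<leftarrow>xs. \<Sum>y\<leftarrow>ys. f x y) = (\<Sum>y\<leftarrow>ys. \<Sum>x\<leftarrow>xs. (f x y :: 'b::ab_group_add))"
  by (induction xs) (auto simp: sum_list_addf)

lemma sum_list_concat: "sum_list (concat xss) = sum_list (map sum_list xss)"
  by (induction xss) auto

lemma sum_list_fun_apply: "(\<Sum>i\<leftarrow>xs. F i) x = (\<Sum>i\<leftarrow>xs. F i x)"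
  by (induction xs) auto

lemma sum_list_map_cong:
  "(\<And>x. x \<in> set xs \<Longrightarrow> f x = g x) \<Longrightarrow> sum_list (map f xs) = sum_list (map g xs)"
  by (metis map_cong)

lemma lin_on_comp:
  "lin_on s1 s2 U V f \<Longrightarrow> lin_on s2 s3 V W g \<Longrightarrow> lin_on s1 s3 U W (\<lambda>x. g (f x))"
  unfolding lin_on_def by auto

lemma lin_on_UNIV_sum_list:
  assumes "lin_on s (*) UNIV UNIV l"
  shows "l (\<Sum>x\<leftarrow>xs. F x) = (\<Sum>x\<leftarrow>xs. l (F x))"
  using assms additive_on_sum_list[of UNIV l xs F] unfolding lin_on_def by auto

lemma lin_on_sum_list:
  assumes vs: "vector_space s2" and z: "0 \<in> V" and cl: "\<forall>x\<in>V. \<forall>y\<in>V. x + y \<in> V"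
    and F: "\<And>a b. (a, b) \<in> set xs \<Longrightarrow> lin_on s1 s2 U V (\<lambda>u. F a b u)"
  shows "lin_on s1 s2 U V (\<lambda>u. \<Sum>(a, b)\<leftarrow>xs. F a b u)"
  using F
proof (induction xs)
  case Nil
  interpret module s2 using vs by (simp add: module_iff_vector_space)
  show ?case using z unfolding lin_on_def by simp
next
  case (Cons p xs)
  interpret module s2 using vs by (simp add: module_iff_vector_space)
  have "lin_on s1 s2 U V (\<lambda>u. case p of (a, b) \<Rightarrow> F a b u)"
    using Cons.prems by (cases p) auto
  moreover have "lin_on s1 s2 U V (\<lambda>u. \<Sum>(a, b)\<leftarrow>xs. F a b u)"
    using Cons by auto
  ultimately show ?case
    using cl unfolding lin_on_def by (auto simp: algebra_simps scale_right_distrib)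
qed

lemma eq_if_linear_functionals_eq:
  assumes vs: "vector_space s"
    and h: "\<forall>l. lin_on s (*) UNIV UNIV l \<longrightarrow> l x = l y"
  shows "x = y"
proof -
  interpret vector_space s by fact
  obtain B where B: "independent B" "UNIV \<subseteq> span B"
    by (rule basis_exists[of UNIV])
  have spB: "span B = UNIV" using B by auto
  have "lin_on s (*) UNIV UNIV (\<lambda>v. representation B v b)" for b
  proof -
    interpret L: Vector_Spaces.linear s "(*)" "\<lambda>v. representation B v b"
      by (rule linear_representation[OF B(1) spB])
    show ?thesis unfolding lin_on_def by (simp add: L.add L.scale)
  qed
  then have eq: "representation B x = representation B y"
    using h by blast
  have "x = (\<Sum>b | representation B x b \<noteq> 0. s (representation B x b) b)"
    using sum_nonzero_representation_eq[OF B(1), of x] spB by simp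
  also have "\<dots> = y"
    unfolding eq using sum_nonzero_representation_eq[OF B(1), of y] spB by simp
  finally show ?thesis .
qed

lemma teq2_sum_list_eq:
  assumes teq: "teq2 s1 s2 U V xs ys" and vs: "vector_space sW"
    and l2: "\<forall>u\<in>U. \<forall>v\<in>V. \<forall>v'\<in>V. F u (v + v') = F u v + F u v'"
    and h2: "\<forall>u\<in>U. \<forall>v\<in>V. \<forall>c. F u (s2 c v) = sW c (F u v)"
    and l1: "\<forall>u\<in>U. \<forall>u'\<in>U. \<forall>v\<in>V. F (u + u') v = F u v + F u' v"
    and h1: "\<forall>u\<in>U. \<forall>v\<in>V. \<forall>c. F (s1 c u) v = sW c (F u v)"
  shows "(\<Sum>(u,v)\<leftarrow>xs. F u v) = (\<Sum>(u,v)\<leftarrow>ys. F u v)"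
proof (rule eq_if_linear_functionals_eq[OF vs], intro allI impI)
  fix l assume l: "lin_on sW (*) UNIV UNIV l"
  have "bilin_on s1 s2 U V (\<lambda>u v. l (F u v))"
    using l unfolding bilin_on_def lin_on_def by (simp add: l2 h2 l1 h1)
  then have "(\<Sum>(u,v)\<leftarrow>xs. l (F u v)) = (\<Sum>(u,v)\<leftarrow>ys. l (F u v))"
    using teq unfolding teq2_def by blast
  then show "l (\<Sum>(u,v)\<leftarrow>xs. F u v) = l (\<Sum>(u,v)\<leftarrow>ys. F u v)"
    using lin_on_UNIV_sum_list[OF l, of "\<lambda>(u,v). F u v"] by (simp add: case_prod_unfold)
qed

lemma teq3_sum_list_eq:
  assumes teq: "teq3 s1 s2 s3 U V W xs ys" and vs: "vector_space sX"
    and l3: "\<forall>u\<in>U. \<forall>v\<in>V. \<forall>w\<in>W. \<forall>w'\<in>W. F u v (w + w') = F u v w + F u v w'"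
    and h3: "\<forall>u\<in>U. \<forall>v\<in>V. \<forall>w\<in>W. \<forall>c. F u v (s3 c w) = sX c (F u v w)"
    and l2: "\<forall>u\<in>U. \<forall>v\<in>V. \<forall>v'\<in>V. \<forall>w\<in>W. F u (v + v') w = F u v w + F u v' w"
    and h2: "\<forall>u\<in>U. \<forall>v\<in>V. \<forall>w\<in>W. \<forall>c. F u (s2 c v) w = sX c (F u v w)"
    and l1: "\<forall>u\<in>U. \<forall>u'\<in>U. \<forall>v\<in>V. \<forall>w\<in>W. F (u + u') v w = F u v w + F u' v w"
    and h1: "\<forall>u\<in>U. \<forall>v\<in>V. \<forall>w\<in>W. \<forall>c. F (s1 c u) v w = sX c (F u v w)"
  shows "(\<Sum>(u,v,w)\<leftarrow>xs. F u v w) = (\<Sum>(u,v,w)\<leftarrow>ys. F u v w)"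
proof (rule eq_if_linear_functionals_eq[OF vs], intro allI impI)
  fix l assume l: "lin_on sX (*) UNIV UNIV l"
  have "trilin_on s1 s2 s3 U V W (\<lambda>u v w. l (F u v w))"
    using l unfolding trilin_on_def lin_on_def by (simp add: l3 h3 l2 h2 l1 h1)
  then have "(\<Sum>(u,v,w)\<leftarrow>xs. l (F u v w)) = (\<Sum>(u,v,w)\<leftarrow>ys. l (F u v w))"
    using teq unfolding teq3_def by blast
  then show "l (\<Sum>(u,v,w)\<leftarrow>xs. F u v w) = l (\<Sum>(u,v,w)\<leftarrow>ys. F u v w)"
    using lin_on_UNIV_sum_list[OF l, of "\<lambda>(u,v,w). F u v w"] by (simp add: case_prod_unfold)
qed

lemma tmap2_sum_list_linear:
  assumes tm: "tmap2 s1 s2 s3 s4 U V X Y F" and vs: "vector_space sW"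
    and g1: "\<forall>x\<in>X. \<forall>y\<in>Y. \<forall>y'\<in>Y. G x (y + y') = G x y + G x y'"
    and g2: "\<forall>x\<in>X. \<forall>y\<in>Y. \<forall>c. G x (s4 c y) = sW c (G x y)"
    and g3: "\<forall>x\<in>X. \<forall>x'\<in>X. \<forall>y\<in>Y. G (x + x') y = G x y + G x' y"
    and g4: "\<forall>x\<in>X. \<forall>y\<in>Y. \<forall>c. G (s3 c x) y = sW c (G x y)"
  shows "\<forall>u\<in>U. \<forall>u'\<in>U. \<forall>v\<in>V. (\<Sum>(x,y)\<leftarrow>F (u + u') v. G x y) = (\<Sum>(x,y)\<leftarrow>F u v. G x y) + (\<Sum>(x,y)\<leftarrow>F u' v. G x y)"
    "\<forall>u\<in>U. \<forall>v\<in>V. \<forall>v'\<in>V. (\<Sum>(x,y)\<leftarrow>F u (v + v'). G x y) = (\<Sum>(x,y)\<leftarrow>F u v. G x y) + (\<Sum>(x,y)\<leftarrow>F u v'. G x y)"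
    "\<forall>c. \<forall>u\<in>U. \<forall>v\<in>V. (\<Sum>(x,y)\<leftarrow>F (s1 c u) v. G x y) = sW c (\<Sum>(x,y)\<leftarrow>F u v. G x y)"
    "\<forall>c. \<forall>u\<in>U. \<forall>v\<in>V. (\<Sum>(x,y)\<leftarrow>F u (s2 c v). G x y) = sW c (\<Sum>(x,y)\<leftarrow>F u v. G x y)"
proof -
  note sum_eq = teq2_sum_list_eq[OF _ vs g1 g2 g3 g4]
  have sum_scale: "(\<Sum>(x,y)\<leftarrow>map (\<lambda>(x,y). (s3 c x, y)) L. G x y) = sW c (\<Sum>(x,y)\<leftarrow>L. G x y)"
    if "set L \<subseteq> X \<times> Y" for L c
  proof -
    have "(\<Sum>(x,y)\<leftarrow>map (\<lambda>(x,y). (s3 c x, y)) L. G x y) = (\<Sum>(x,y)\<leftarrow>L. sW c (G x y))"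
      using that g4 by (auto simp: comp_def case_prod_unfold intro!: sum_list_map_cong)
    then show ?thesis
      using scale_sum_list[OF vs, of c "\<lambda>(x,y). G x y" L] by (simp add: case_prod_unfold)
  qed
  have F_set: "set (F u v) \<subseteq> X \<times> Y" if "u \<in> U" "v \<in> V" for u v
    using tm that unfolding tmap2_def by blast
  have add_left: "teq2 s3 s4 X Y (F (u + u') v) (F u v @ F u' v)"
    if "u \<in> U" "u' \<in> U" "v \<in> V" for u u' v
    using tm that unfolding tmap2_def by blast
  have add_right: "teq2 s3 s4 X Y (F u (v + v')) (F u v @ F u v')"
    if "u \<in> U" "v \<in> V" "v' \<in> V" for u v v'
    using tm that unfolding tmap2_def by blast
  have scale_left: "teq2 s3 s4 X Y (F (s1 c u) v) (map (\<lambda>(x,y). (s3 c x, y)) (F u v))"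
    if "u \<in> U" "v \<in> V" for u v c
    using tm that unfolding tmap2_def by blast
  have scale_right: "teq2 s3 s4 X Y (F u (s2 c v)) (map (\<lambda>(x,y). (s3 c x, y)) (F u v))"
    if "u \<in> U" "v \<in> V" for u v c
    using tm that unfolding tmap2_def by blast
  show "\<forall>u\<in>U. \<forall>u'\<in>U. \<forall>v\<in>V. (\<Sum>(x,y)\<leftarrow>F (u + u') v. G x y) = (\<Sum>(x,y)\<leftarrow>F u v. G x y) + (\<Sum>(x,y)\<leftarrow>F u' v. G x y)"
    by (intro ballI) (simp add: sum_eq[OF add_left])
  show "\<forall>u\<in>U. \<forall>v\<in>V. \<forall>v'\<in>V. (\<Sum>(x,y)\<leftarrow>F u (v + v'). G x y) = (\<Sum>(x,y)\<leftarrow>F u v. G x y) + (\<Sum>(x,y)\<leftarrow>F u v'. G x y)"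
    by (intro ballI) (simp add: sum_eq[OF add_right])
  show "\<forall>c. \<forall>u\<in>U. \<forall>v\<in>V. (\<Sum>(x,y)\<leftarrow>F (s1 c u) v. G x y) = sW c (\<Sum>(x,y)\<leftarrow>F u v. G x y)"
    by (intro allI ballI) (simp only: sum_eq[OF scale_left] sum_scale[OF F_set])
  show "\<forall>c. \<forall>u\<in>U. \<forall>v\<in>V. (\<Sum>(x,y)\<leftarrow>F u (s2 c v). G x y) = sW c (\<Sum>(x,y)\<leftarrow>F u v. G x y)"
    by (intro allI ballI) (simp only: sum_eq[OF scale_right] sum_scale[OF F_set])
qed

lemma LHom_restrict0:
  assumes "lin_on s1 s2 U V h" "\<forall>x\<in>U. \<forall>y\<in>U. x + y \<in> U" "\<forall>c. \<forall>x\<in>U. s1 c x \<in> U"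
  shows "restrict0 U h \<in> LHom s1 s2 U V"
  using assms unfolding LHom_def lin_on_def restrict0_def by auto

lemma LHom_lin: "g \<in> LHom s1 s2 U V \<Longrightarrow> lin_on s1 s2 U V g"
  unfolding LHom_def by auto

lemma LHom_in: "g \<in> LHom s1 s2 U V \<Longrightarrow> x \<in> U \<Longrightarrow> g x \<in> V"
  unfolding LHom_def lin_on_def by auto

lemma LHom_add: "g \<in> LHom s1 s2 U V \<Longrightarrow> x \<in> U \<Longrightarrow> y \<in> U \<Longrightarrow> g (x + y) = g x + g y"
  unfolding LHom_def lin_on_def by auto

lemma LHom_scale: "g \<in> LHom s1 s2 U V \<Longrightarrow> x \<in> U \<Longrightarrow> g (s1 c x) = s2 c (g x)"
  unfolding LHom_def lin_on_def by auto

lemma restrict0_in [simp]: "x \<in> U \<Longrightarrow> restrict0 U h x = h x"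
  by (simp add: restrict0_def)

lemma restrict0_cong: "(\<And>x. x \<in> U \<Longrightarrow> h x = h' x) \<Longrightarrow> restrict0 U h = restrict0 U h'"
  by (auto simp: restrict0_def)

lemma vector_space_fscale:
  assumes "vector_space s" shows "vector_space (fscale s)"
proof -
  interpret module s using assms by (simp add: module_iff_vector_space)
  show ?thesis unfolding vector_space_def fscale_def
    by (auto simp: fun_eq_iff scale_right_distrib scale_left_distrib)
qed

lemma LHom_subspace:
  assumes vs: "vector_space s2" and z: "0 \<in> V" and cl: "\<forall>x\<in>V. \<forall>y\<in>V. x + y \<in> V"
    and cs: "\<forall>c. \<forall>x\<in>V. s2 c x \<in> V"
  shows "0 \<in> LHom s1 s2 U V" "\<forall>g\<in>LHom s1 s2 U V. \<forall>g'\<in>LHom s1 s2 U V. g + g' \<in> LHom s1 s2 U V"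
    "\<forall>c. \<forall>g\<in>LHom s1 s2 U V. fscale s2 c g \<in> LHom s1 s2 U V"
proof -
  interpret module s2 using vs by (simp add: module_iff_vector_space)
  show "0 \<in> LHom s1 s2 U V" using z unfolding LHom_def lin_on_def by auto
  show "\<forall>g\<in>LHom s1 s2 U V. \<forall>g'\<in>LHom s1 s2 U V. g + g' \<in> LHom s1 s2 U V"
    using cl unfolding LHom_def lin_on_def by (auto simp: algebra_simps scale_right_distrib)
  show "\<forall>c. \<forall>g\<in>LHom s1 s2 U V. fscale s2 c g \<in> LHom s1 s2 U V"
    using cs unfolding LHom_def lin_on_def fscale_def by (auto simp: mult.commute scale_right_distrib)
qed

lemma lin_on_postcompose:
  assumes phi: "lin_on s2 s3 V W \<phi>" and vs3: "vector_space s3"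
    and cU: "\<forall>x\<in>U. \<forall>y\<in>U. x + y \<in> U" "\<forall>c. \<forall>x\<in>U. s1 c x \<in> U"
  shows "lin_on (fscale s2) (fscale s3) (LHom s1 s2 U V) (LHom s1 s3 U W)
           (\<lambda>G. restrict0 U (\<lambda>x. \<phi> (G x)))"
proof -
  interpret module s3 using vs3 by (simp add: module_iff_vector_space)
  show ?thesis
    using phi cU unfolding lin_on_def LHom_def restrict0_def fscale_def
    by (auto simp: fun_eq_iff)
qed

section \<open>Entwined contramodules\<close>

locale entwining_cointegral =
  fixes sC :: "'k::field \<Rightarrow> 'c::ab_group_add \<Rightarrow> 'c"
    and C :: "'o \<Rightarrow> 'o \<Rightarrow> 'c set"
    and delta :: "'o \<Rightarrow> 'o \<Rightarrow> 'o \<Rightarrow> 'c \<Rightarrow> ('c \<times> 'c) list"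
    and eps :: "'o \<Rightarrow> 'c \<Rightarrow> 'k"
    and sA :: "'k \<Rightarrow> 'a::ring_1 \<Rightarrow> 'a"
    and psi :: "'o \<Rightarrow> 'o \<Rightarrow> 'c \<Rightarrow> 'a \<Rightarrow> ('a \<times> 'c) list"
    and gamma :: "'o \<Rightarrow> ('a \<Rightarrow> 'k) \<Rightarrow> 'c \<Rightarrow> 'a"
  assumes entwining: "entwining sC C delta eps sA psi"
    and findim: "findim sA"
    and cointegral: "normalized_cointegral sC C delta eps sA psi gamma"
begin

lemma C_add: "\<forall>x\<in>C X Y. \<forall>y\<in>C X Y. x + y \<in> C X Y"
  and C_scale: "\<forall>c. \<forall>x\<in>C X Y. sC c x \<in> C X Y"
  using entwining module_iff_vector_space[of sC] module.subspace_def[of sC "C X Y"]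
  unfolding entwining_def coalgebra_def by auto

lemma psi_tmap2: "tmap2 sC sA sA sC (C X Y) UNIV UNIV (C X Y) (psi X Y)"
  using entwining unfolding entwining_def by auto

lemma psi_set: "f \<in> C X Y \<Longrightarrow> p \<in> set (psi X Y f a) \<Longrightarrow> snd p \<in> C X Y"
  using psi_tmap2[of X Y] unfolding tmap2_def by fastforce

lemma delta_set: "f \<in> C X Z \<Longrightarrow> p \<in> set (delta X Y Z f) \<Longrightarrow> fst p \<in> C Y Z \<and> snd p \<in> C X Y"
  using entwining unfolding entwining_def coalgebra_def tmap1_def by fastforce

lemma coev_dual: "p \<in> set (coev sA) \<Longrightarrow> snd p \<in> Adual sA"
proof -
  assume p: "p \<in> set (coev sA)"
  define B where "B = (SOME B. finite_dimensional_vector_space sA B)"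
  have "finite_dimensional_vector_space sA B"
    using findim unfolding findim_def B_def by (metis someI)
  then interpret finite_dimensional_vector_space sA B .
  define bs where "bs = (SOME bs. distinct bs \<and> set bs = B)"
  have "coev sA = map (\<lambda>b. (b, \<lambda>v. representation B v b)) bs"
    unfolding coev_def B_def bs_def Let_def by simp
  then obtain b where pb: "p = (b, \<lambda>v. representation B v b)" using p by auto
  interpret L: Vector_Spaces.linear sA "(*)" "\<lambda>v. representation B v b"
    by (rule linear_representation[OF independent_Basis span_Basis])
  show ?thesis unfolding pb Adual_def lin_on_def by (simp add: L.add L.scale)
qed

lemma gamma_lin: "p \<in> set (coev sA) \<Longrightarrow> lin_on sC sA (C X X) UNIV (gamma X (snd p))"
  using cointegral coev_dual unfolding normalized_cointegral_def by auto

lemma cointegral_comult: "f \<in> C X Y \<Longrightarrow>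
        teq3 sA sA sC UNIV UNIV (C X Y)
          [(b, d, h). (f1, f2) \<leftarrow> delta X X Y f, (ai, ai') \<leftarrow> coev sA,
                      (b, g) \<leftarrow> psi X Y f1 ai, (d, h) \<leftarrow> psi X Y g (gamma X ai' f2)]
          [(ai, gamma Y ai' f1, f2). (ai, ai') \<leftarrow> coev sA, (f1, f2) \<leftarrow> delta X Y Y f]"
  using cointegral unfolding normalized_cointegral_def by auto

lemma cointegral_mult: "f \<in> C X X \<Longrightarrow>
        teq2 sA sA UNIV UNIV
          [(ai, gamma X ai' f * a). (ai, ai') \<leftarrow> coev sA]
          [(b * ai, gamma X ai' g). (b, g) \<leftarrow> psi X X f a, (ai, ai') \<leftarrow> coev sA]"
  using cointegral unfolding normalized_cointegral_def by auto

lemma cointegral_normalized: "f \<in> C X X \<Longrightarrow> (\<Sum>(ai, ai')\<leftarrow>coev sA. ai * gamma X ai' f) = sA (eps X f) 1"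
  using cointegral unfolding normalized_cointegral_def by auto

end

locale entwined_ctr = entwining_cointegral sC C delta eps sA psi gamma
  for sC :: "'k::field \<Rightarrow> 'c::ab_group_add \<Rightarrow> 'c"
    and C :: "'o \<Rightarrow> 'o \<Rightarrow> 'c set"
    and delta :: "'o \<Rightarrow> 'o \<Rightarrow> 'o \<Rightarrow> 'c \<Rightarrow> ('c \<times> 'c) list"
    and eps :: "'o \<Rightarrow> 'c \<Rightarrow> 'k"
    and sA :: "'k \<Rightarrow> 'a::ring_1 \<Rightarrow> 'a"
    and psi :: "'o \<Rightarrow> 'o \<Rightarrow> 'c \<Rightarrow> 'a \<Rightarrow> ('a \<times> 'c) list"
    and gamma :: "'o \<Rightarrow> ('a \<Rightarrow> 'k) \<Rightarrow> 'c \<Rightarrow> 'a" +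
  fixes sM :: "'k \<Rightarrow> 'm::ab_group_add \<Rightarrow> 'm" and M :: "'o \<Rightarrow> 'm set"
    and pr :: "'o \<Rightarrow> 'o \<Rightarrow> ('c \<Rightarrow> 'm) \<Rightarrow> 'm" and act :: "'o \<Rightarrow> 'a \<Rightarrow> 'm \<Rightarrow> 'm"
  assumes entwined_ctr: "entwined_contramodule sC C delta eps sA psi sM M pr act"
begin

lemma vector_space_M: "vector_space sM"
  using entwined_ctr unfolding entwined_contramodule_def contramodule_def by auto

lemma M_zero: "0 \<in> M X" and M_add: "\<forall>x\<in>M X. \<forall>y\<in>M X. x + y \<in> M X"
  and M_scale: "\<forall>c. \<forall>x\<in>M X. sM c x \<in> M X"
  using entwined_ctr vector_space_M module_iff_vector_space[of sM] module.subspace_def[of sM "M X"]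
  unfolding entwined_contramodule_def contramodule_def by auto

lemmas LHom_M = LHom_subspace[OF vector_space_M M_zero M_add M_scale]

lemma sum_list_in_M: "\<forall>x\<in>set xs. F x \<in> M X \<Longrightarrow> (\<Sum>x\<leftarrow>xs. F x) \<in> M X"
  by (rule sum_list_closed[OF M_zero M_add])

lemma LHom_sum_list:
  "h \<in> LHom sM s2 (M X) V \<Longrightarrow> \<forall>x\<in>set xs. F x \<in> M X \<Longrightarrow> h (\<Sum>x\<leftarrow>xs. F x) = (\<Sum>x\<leftarrow>xs. h (F x))"
  using LHom_add M_zero M_add by (intro additive_on_sum_list) auto

lemma pr_lin: "lin_on (fscale sM) sM (LHom sC sM (C X Y) (M Y)) (M X) (pr X Y)"
  using entwined_ctr unfolding entwined_contramodule_def contramodule_def by auto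

lemma pr_assoc: "g \<in> LHom sC (fscale sM) (C X Y) (LHom sC sM (C Y Z) (M Z)) \<Longrightarrow>
        pr X Y (restrict0 (C X Y) (\<lambda>f. pr Y Z (g f))) =
        pr X Z (restrict0 (C X Z) (\<lambda>f. \<Sum>(f1, f2)\<leftarrow>delta X Y Z f. g f2 f1))"
  using entwined_ctr unfolding entwined_contramodule_def contramodule_def by auto

lemma pr_counit: "m \<in> M X \<Longrightarrow> pr X X (restrict0 (C X X) (\<lambda>f. sM (eps X f) m)) = m"
  using entwined_ctr unfolding entwined_contramodule_def contramodule_def by auto

lemma pr_in: "g \<in> LHom sC sM (C X Y) (M Y) \<Longrightarrow> pr X Y g \<in> M X"
  using pr_lin[of X Y] unfolding lin_on_def by auto

lemma pr_sum_list:
  assumes "\<forall>x\<in>set xs. G x \<in> LHom sC sM (C X Y) (M Y)"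
  shows "pr X Y (\<Sum>x\<leftarrow>xs. G x) = (\<Sum>x\<leftarrow>xs. pr X Y (G x))"
proof (rule additive_on_sum_list[OF _ LHom_M(1,2) assms])
  show "\<forall>x\<in>LHom sC sM (C X Y) (M Y). \<forall>y\<in>LHom sC sM (C X Y) (M Y). pr X Y (x + y) = pr X Y x + pr X Y y"
    using pr_lin[of X Y] unfolding lin_on_def by blast
qed

lemma act_lin_a: "m \<in> M X \<Longrightarrow> lin_on sA sM UNIV (M X) (\<lambda>a. act X a m)"
  using entwined_ctr unfolding entwined_contramodule_def by auto

lemma act_lin_m: "lin_on sM sM (M X) (M X) (act X a)"
  using entwined_ctr unfolding entwined_contramodule_def by auto

lemma act_one: "m \<in> M X \<Longrightarrow> act X 1 m = m"
  using entwined_ctr unfolding entwined_contramodule_def by auto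

lemma act_mult: "m \<in> M X \<Longrightarrow> act X (a * b) m = act X a (act X b m)"
  using entwined_ctr unfolding entwined_contramodule_def by auto

lemma act_in: "m \<in> M X \<Longrightarrow> act X a m \<in> M X"
  using act_lin_m[of X a] unfolding lin_on_def by auto

lemma act_add_m: "m \<in> M X \<Longrightarrow> m' \<in> M X \<Longrightarrow> act X a (m + m') = act X a m + act X a m'"
  using act_lin_m[of X a] unfolding lin_on_def by auto

lemma act_scale_m: "m \<in> M X \<Longrightarrow> act X a (sM c m) = sM c (act X a m)"
  using act_lin_m[of X a] unfolding lin_on_def by auto

lemma act_add_a: "m \<in> M X \<Longrightarrow> act X (a + a') m = act X a m + act X a' m"
  using act_lin_a[of m X] unfolding lin_on_def by auto

lemma act_scale_a: "m \<in> M X \<Longrightarrow> act X (sA c a) m = sM c (act X a m)"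
  using act_lin_a[of m X] unfolding lin_on_def by auto

lemma act_sum_list_m: "\<forall>x\<in>set xs. F x \<in> M X \<Longrightarrow> act X a (\<Sum>x\<leftarrow>xs. F x) = (\<Sum>x\<leftarrow>xs. act X a (F x))"
  using act_lin_m[of X a] M_zero M_add unfolding lin_on_def by (intro additive_on_sum_list) auto

lemma act_sum_list_a: "m \<in> M X \<Longrightarrow> act X (\<Sum>x\<leftarrow>xs. F x) m = (\<Sum>x\<leftarrow>xs. act X (F x) m)"
  using act_lin_a[of m X] additive_on_sum_list[of UNIV "\<lambda>a. act X a m" xs F]
  unfolding lin_on_def by auto

lemma act_cointegral:
  assumes m: "m \<in> M X" and f: "f \<in> C X X"
  shows "(\<Sum>(ai, ai')\<leftarrow>coev sA. act X ai (act X (gamma X ai' f) m)) = sM (eps X f) m"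
proof -
  have "(\<Sum>(ai, ai')\<leftarrow>coev sA. act X ai (act X (gamma X ai' f) m)) =
        act X (\<Sum>(ai, ai')\<leftarrow>coev sA. ai * gamma X ai' f) m"
    using act_sum_list_a[OF m, of "\<lambda>p. fst p * gamma X (snd p) f" "coev sA"] m
    by (simp add: act_mult case_prod_unfold)
  also have "\<dots> = sM (eps X f) m"
    using m by (simp add: cointegral_normalized[OF f] act_scale_a act_one)
  finally show ?thesis .
qed

text \<open>The A-action (a \<cdot> g)(f) = a_\<psi> \<cdot> g(f^\<psi>) on Hom(\<C>(X,Y), M(Y)); the entwined-contramodule
  axiom says precisely that pr X Y is A-linear for it.\<close>

definition hom_act :: "'o \<Rightarrow> 'o \<Rightarrow> 'a \<Rightarrow> ('c \<Rightarrow> 'm) \<Rightarrow> 'c \<Rightarrow> 'm" where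
  "hom_act X Y a g = restrict0 (C X Y) (\<lambda>f. \<Sum>(b, h)\<leftarrow>psi X Y f a. act Y b (g h))"

lemma act_pr: "g \<in> LHom sC sM (C X Y) (M Y) \<Longrightarrow> act X a (pr X Y g) = pr X Y (hom_act X Y a g)"
  using entwined_ctr unfolding entwined_contramodule_def hom_act_def by auto

lemma psi_sum_act_linear:
  assumes g: "g \<in> LHom sC sM (C X Y) (M Y)"
  defines "G \<equiv> \<lambda>b h. act Y b (g h)"
  shows "\<forall>u\<in>C X Y. \<forall>u'\<in>C X Y. \<forall>v\<in>UNIV. (\<Sum>(x,y)\<leftarrow>psi X Y (u + u') v. G x y) = (\<Sum>(x,y)\<leftarrow>psi X Y u v. G x y) + (\<Sum>(x,y)\<leftarrow>psi X Y u' v. G x y)"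
    "\<forall>u\<in>C X Y. \<forall>v\<in>UNIV. \<forall>v'\<in>UNIV. (\<Sum>(x,y)\<leftarrow>psi X Y u (v + v'). G x y) = (\<Sum>(x,y)\<leftarrow>psi X Y u v. G x y) + (\<Sum>(x,y)\<leftarrow>psi X Y u v'. G x y)"
    "\<forall>c. \<forall>u\<in>C X Y. \<forall>v\<in>UNIV. (\<Sum>(x,y)\<leftarrow>psi X Y (sC c u) v. G x y) = sM c (\<Sum>(x,y)\<leftarrow>psi X Y u v. G x y)"
    "\<forall>c. \<forall>u\<in>C X Y. \<forall>v\<in>UNIV. (\<Sum>(x,y)\<leftarrow>psi X Y u (sA c v). G x y) = sM c (\<Sum>(x,y)\<leftarrow>psi X Y u v. G x y)"
proof -
  have gin: "h \<in> C X Y \<Longrightarrow> g h \<in> M Y" for h using LHom_in[OF g] .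
  show "\<forall>u\<in>C X Y. \<forall>u'\<in>C X Y. \<forall>v\<in>UNIV. (\<Sum>(x,y)\<leftarrow>psi X Y (u + u') v. G x y) = (\<Sum>(x,y)\<leftarrow>psi X Y u v. G x y) + (\<Sum>(x,y)\<leftarrow>psi X Y u' v. G x y)"
    "\<forall>u\<in>C X Y. \<forall>v\<in>UNIV. \<forall>v'\<in>UNIV. (\<Sum>(x,y)\<leftarrow>psi X Y u (v + v'). G x y) = (\<Sum>(x,y)\<leftarrow>psi X Y u v. G x y) + (\<Sum>(x,y)\<leftarrow>psi X Y u v'. G x y)"
    "\<forall>c. \<forall>u\<in>C X Y. \<forall>v\<in>UNIV. (\<Sum>(x,y)\<leftarrow>psi X Y (sC c u) v. G x y) = sM c (\<Sum>(x,y)\<leftarrow>psi X Y u v. G x y)"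
    "\<forall>c. \<forall>u\<in>C X Y. \<forall>v\<in>UNIV. (\<Sum>(x,y)\<leftarrow>psi X Y u (sA c v). G x y) = sM c (\<Sum>(x,y)\<leftarrow>psi X Y u v. G x y)"
    using tmap2_sum_list_linear[OF psi_tmap2 vector_space_M, where G=G]
    unfolding G_def using LHom_add[OF g] LHom_scale[OF g] gin act_add_m act_scale_m act_add_a act_scale_a
    by auto
qed

lemma hom_act_LHom:
  assumes g: "g \<in> LHom sC sM (C X Y) (M Y)"
  shows "hom_act X Y a g \<in> LHom sC sM (C X Y) (M Y)"
  unfolding hom_act_def
proof (rule LHom_restrict0[OF _ C_add C_scale])
  have "(\<Sum>(b, h)\<leftarrow>psi X Y f a. act Y b (g h)) \<in> M Y" if "f \<in> C X Y" for f
    using psi_set[OF that] LHom_in[OF g] act_in by (intro sum_list_in_M) auto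
  then show "lin_on sC sM (C X Y) (M Y) (\<lambda>f. \<Sum>(b, h)\<leftarrow>psi X Y f a. act Y b (g h))"
    unfolding lin_on_def using psi_sum_act_linear(1,3)[OF g] by auto
qed

lemma hom_act_lin_a:
  assumes g: "g \<in> LHom sC sM (C X Y) (M Y)"
  shows "lin_on sA (fscale sM) UNIV (LHom sC sM (C X Y) (M Y)) (\<lambda>a. hom_act X Y a g)"
proof -
  interpret module sM using vector_space_M by (simp add: module_iff_vector_space)
  show ?thesis unfolding lin_on_def
    using hom_act_LHom[OF g] psi_sum_act_linear(2,4)[OF g]
    by (auto simp: hom_act_def fun_eq_iff restrict0_def fscale_def)
qed

lemma hom_act_lin_g:
  "lin_on (fscale sM) (fscale sM) (LHom sC sM (C X Y) (M Y)) (LHom sC sM (C X Y) (M Y)) (hom_act X Y a)"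
proof -
  interpret module sM using vector_space_M by (simp add: module_iff_vector_space)
  have "hom_act X Y a (g + g') = hom_act X Y a g + hom_act X Y a g'"
    if g: "g \<in> LHom sC sM (C X Y) (M Y)" and g': "g' \<in> LHom sC sM (C X Y) (M Y)" for g g'
  proof -
    have "(\<Sum>(b, h)\<leftarrow>psi X Y f a. act Y b ((g + g') h)) =
          (\<Sum>(b, h)\<leftarrow>psi X Y f a. act Y b (g h)) + (\<Sum>(b, h)\<leftarrow>psi X Y f a. act Y b (g' h))"
      if f: "f \<in> C X Y" for f
      using psi_set[OF f] LHom_in[OF g] LHom_in[OF g'] act_add_m
      by (auto simp: sum_list_addf[symmetric] split: prod.splits intro!: sum_list_map_cong)
    then show ?thesis by (auto simp: hom_act_def fun_eq_iff restrict0_def)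
  qed
  moreover have "hom_act X Y a (fscale sM c g) = fscale sM c (hom_act X Y a g)"
    if g: "g \<in> LHom sC sM (C X Y) (M Y)" for g c
  proof -
    have "(\<Sum>(b, h)\<leftarrow>psi X Y f a. act Y b (sM c (g h))) = sM c (\<Sum>(b, h)\<leftarrow>psi X Y f a. act Y b (g h))"
      if f: "f \<in> C X Y" for f
      using psi_set[OF f] LHom_in[OF g] act_scale_m
      by (auto simp: scale_sum_list[OF vector_space_M] split: prod.splits intro!: sum_list_map_cong)
    then show ?thesis by (auto simp: hom_act_def fun_eq_iff restrict0_def fscale_def)
  qed
  ultimately show ?thesis unfolding lin_on_def using hom_act_LHom by auto
qed

end

section \<open>Averaging along a normalized cointegral\<close>

lemma entwined_morphismD:
  assumes "entwined_morphism sC C sM M pr act sN N pr' act' phi"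
  shows "phi X \<in> LHom sM sN (M X) (N X)"
    and "g \<in> LHom sC sM (C X Y) (M Y) \<Longrightarrow> phi X (pr X Y g) = pr' X Y (restrict0 (C X Y) (\<lambda>f. phi Y (g f)))"
    and "m \<in> M X \<Longrightarrow> phi X (act X a m) = act' X a (phi X m)"
  using assms unfolding entwined_morphism_def ctr_morphism_def by auto

locale cointegral_averaging =
  M: entwined_ctr sC C delta eps sA psi gamma sM M pr act +
  N: entwined_ctr sC C delta eps sA psi gamma sN N pr' act'
  for sC :: "'k::field \<Rightarrow> 'c::ab_group_add \<Rightarrow> 'c"
    and C :: "'o \<Rightarrow> 'o \<Rightarrow> 'c set"
    and delta :: "'o \<Rightarrow> 'o \<Rightarrow> 'o \<Rightarrow> 'c \<Rightarrow> ('c \<times> 'c) list"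
    and eps :: "'o \<Rightarrow> 'c \<Rightarrow> 'k"
    and sA :: "'k \<Rightarrow> 'a::ring_1 \<Rightarrow> 'a"
    and psi :: "'o \<Rightarrow> 'o \<Rightarrow> 'c \<Rightarrow> 'a \<Rightarrow> ('a \<times> 'c) list"
    and gamma :: "'o \<Rightarrow> ('a \<Rightarrow> 'k) \<Rightarrow> 'c \<Rightarrow> 'a"
    and sM :: "'k \<Rightarrow> 'm::ab_group_add \<Rightarrow> 'm" and M :: "'o \<Rightarrow> 'm set"
    and pr :: "'o \<Rightarrow> 'o \<Rightarrow> ('c \<Rightarrow> 'm) \<Rightarrow> 'm" and act :: "'o \<Rightarrow> 'a \<Rightarrow> 'm \<Rightarrow> 'm"
    and sN :: "'k \<Rightarrow> 'n::ab_group_add \<Rightarrow> 'n" and N :: "'o \<Rightarrow> 'n set"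
    and pr' :: "'o \<Rightarrow> 'o \<Rightarrow> ('c \<Rightarrow> 'n) \<Rightarrow> 'n" and act' :: "'o \<Rightarrow> 'a \<Rightarrow> 'n \<Rightarrow> 'n" +
  fixes s :: "'o \<Rightarrow> 'n \<Rightarrow> 'm"
  assumes s_ctr_morphism: "ctr_morphism sC C sN N pr' sM M pr s"
begin

definition s_comp :: "'o \<Rightarrow> 'o \<Rightarrow> ('c \<Rightarrow> 'n) \<Rightarrow> 'c \<Rightarrow> 'm" where
  "s_comp X Y G = restrict0 (C X Y) (\<lambda>h. s Y (G h))"

lemma s_LHom: "s X \<in> LHom sN sM (N X) (M X)"
  using s_ctr_morphism unfolding ctr_morphism_def by auto

lemma s_pr: "g \<in> LHom sC sN (C X Y) (N Y) \<Longrightarrow> s X (pr' X Y g) = pr X Y (s_comp X Y g)"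
  using s_ctr_morphism unfolding ctr_morphism_def s_comp_def by auto

lemmas s_lin = LHom_lin[OF s_LHom] and s_in = LHom_in[OF s_LHom]
  and s_add = LHom_add[OF s_LHom] and s_scale = LHom_scale[OF s_LHom]

lemmas s_sum_list = N.LHom_sum_list[OF s_LHom]

lemma s_comp_lin:
  "lin_on (fscale sN) (fscale sM) (LHom sC sN (C X Y) (N Y)) (LHom sC sM (C X Y) (M Y)) (s_comp X Y)"
  unfolding s_comp_def by (rule lin_on_postcompose[OF s_lin M.vector_space_M M.C_add M.C_scale])

lemma s_comp_LHom: "G \<in> LHom sC sN (C X Y) (N Y) \<Longrightarrow> s_comp X Y G \<in> LHom sC sM (C X Y) (M Y)"
  using s_comp_lin unfolding lin_on_def by blast

definition average_integrand :: "'o \<Rightarrow> 'n \<Rightarrow> 'c \<Rightarrow> 'm" where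
  "average_integrand X n = restrict0 (C X X)
     (\<lambda>f. \<Sum>(ai, ai')\<leftarrow>coev sA. act X ai (s X (act' X (gamma X ai' f) n)))"

definition average :: "'o \<Rightarrow> 'n \<Rightarrow> 'm" where
  "average X = restrict0 (N X) (\<lambda>n. pr X X (average_integrand X n))"

lemma average_integrand_apply:
  "f \<in> C X X \<Longrightarrow> average_integrand X n f = (\<Sum>(ai, ai')\<leftarrow>coev sA. act X ai (s X (act' X (gamma X ai' f) n)))"
  unfolding average_integrand_def by simp

lemma average_apply: "n \<in> N X \<Longrightarrow> average X n = pr X X (average_integrand X n)"
  unfolding average_def by simp

lemma average_integrand_LHom:
  assumes n: "n \<in> N X"
  shows "average_integrand X n \<in> LHom sC sM (C X X) (M X)"
  unfolding average_integrand_def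
proof (rule LHom_restrict0[OF lin_on_sum_list[OF M.vector_space_M M.M_zero M.M_add] M.C_add M.C_scale])
  fix ai ai' assume "(ai, ai') \<in> set (coev sA)"
  then have "lin_on sC sA (C X X) UNIV (gamma X ai')"
    using M.gamma_lin by fastforce
  then show "lin_on sC sM (C X X) (M X) (\<lambda>f. act X ai (s X (act' X (gamma X ai' f) n)))"
    by (rule lin_on_comp[OF lin_on_comp[OF lin_on_comp[OF _ N.act_lin_a[OF n]] s_lin] M.act_lin_m])
qed

lemma average_integrand_lin:
  "lin_on sN (fscale sM) (N X) (LHom sC sM (C X X) (M X)) (average_integrand X)"
proof -
  interpret module sM using M.vector_space_M by (simp add: module_iff_vector_space)
  have "lin_on sN sM (N X) (M X) (\<lambda>n. \<Sum>(ai, ai')\<leftarrow>coev sA. act X ai (s X (act' X (gamma X ai' f) n)))"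
    for f
    by (rule lin_on_sum_list[OF M.vector_space_M M.M_zero M.M_add])
      (rule lin_on_comp[OF lin_on_comp[OF N.act_lin_m s_lin] M.act_lin_m])
  then show ?thesis
    using average_integrand_LHom unfolding lin_on_def average_integrand_def
    by (auto simp: fun_eq_iff restrict0_def fscale_def)
qed

lemma average_LHom: "average X \<in> LHom sN sM (N X) (M X)"
  unfolding average_def
  by (rule LHom_restrict0[OF lin_on_comp[OF average_integrand_lin M.pr_lin] N.M_add N.M_scale])

lemma average_integrand_act:
  assumes n: "n \<in> N X"
  shows "average_integrand X (act' X a n) = M.hom_act X X a (average_integrand X n)"
  unfolding average_integrand_def M.hom_act_def
proof (rule restrict0_cong)
  fix f assume f: "f \<in> C X X"
  define B where "B x y = act X x (s X (act' X y n))" for x y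
  have B_in: "s X (act' X y n) \<in> M X" for y using s_in[OF N.act_in[OF n]] .
  have "\<forall>u\<in>UNIV. \<forall>v\<in>UNIV. \<forall>v'\<in>UNIV. B u (v + v') = B u v + B u v'"
    "\<forall>u\<in>UNIV. \<forall>v\<in>UNIV. \<forall>c. B u (sA c v) = sM c (B u v)"
    "\<forall>u\<in>UNIV. \<forall>u'\<in>UNIV. \<forall>v\<in>UNIV. B (u + u') v = B u v + B u' v"
    "\<forall>u\<in>UNIV. \<forall>v\<in>UNIV. \<forall>c. B (sA c u) v = sM c (B u v)"
    unfolding B_def using N.act_add_a[OF n] N.act_scale_a[OF n] s_add[OF N.act_in[OF n] N.act_in[OF n]]
      s_scale[OF N.act_in[OF n]] M.act_add_m[OF B_in B_in] M.act_scale_m[OF B_in]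
      M.act_add_a[OF B_in] M.act_scale_a[OF B_in]
    by simp_all
  note B_sum_eq = teq2_sum_list_eq[OF M.cointegral_mult[OF f] M.vector_space_M this]
  have "(\<Sum>(ai, ai')\<leftarrow>coev sA. act X ai (s X (act' X (gamma X ai' f) (act' X a n)))) =
        (\<Sum>(x, y)\<leftarrow>[(ai, gamma X ai' f * a). (ai, ai') \<leftarrow> coev sA]. B x y)"
    unfolding B_def using N.act_mult[OF n] by (simp add: case_prod_unfold comp_def)
  also have "\<dots> = (\<Sum>(x, y)\<leftarrow>[(b * ai, gamma X ai' g). (b, g) \<leftarrow> psi X X f a, (ai, ai') \<leftarrow> coev sA]. B x y)"
    by (rule B_sum_eq)
  also have "\<dots> = (\<Sum>(b, g)\<leftarrow>psi X X f a. \<Sum>(ai, ai')\<leftarrow>coev sA. B (b * ai) (gamma X ai' g))"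
    by (simp add: case_prod_unfold comp_def map_concat sum_list_concat)
  also have "\<dots> = (\<Sum>(b, g)\<leftarrow>psi X X f a. act X b (restrict0 (C X X)
                     (\<lambda>f. \<Sum>(ai, ai')\<leftarrow>coev sA. act X ai (s X (act' X (gamma X ai' f) n))) g))"
  proof (rule sum_list_map_cong, clarify)
    fix b g assume "(b, g) \<in> set (psi X X f a)"
    then have g: "g \<in> C X X" using M.psi_set[OF f] by fastforce
    have "act X b (\<Sum>(ai, ai')\<leftarrow>coev sA. act X ai (s X (act' X (gamma X ai' g) n))) =
          (\<Sum>(ai, ai')\<leftarrow>coev sA. B (b * ai) (gamma X ai' g))"
      using M.act_sum_list_m[of "coev sA" "\<lambda>p. act X (fst p) (s X (act' X (gamma X (snd p) g) n))" X b]
        M.act_in M.act_mult B_in unfolding B_def by (simp add: case_prod_unfold)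
    then show "(\<Sum>(ai, ai')\<leftarrow>coev sA. B (b * ai) (gamma X ai' g)) =
         act X b (restrict0 (C X X)
            (\<lambda>f. \<Sum>(ai, ai')\<leftarrow>coev sA. act X ai (s X (act' X (gamma X ai' f) n))) g)"
      using g by simp
  qed
  finally show "(\<Sum>(ai, ai')\<leftarrow>coev sA. act X ai (s X (act' X (gamma X ai' f) (act' X a n)))) =
      (\<Sum>(b, h)\<leftarrow>psi X X f a. act X b (restrict0 (C X X)
          (\<lambda>f. \<Sum>(ai, ai')\<leftarrow>coev sA. act X ai (s X (act' X (gamma X ai' f) n))) h))" .
qed

lemma average_act: "n \<in> N X \<Longrightarrow> average X (act' X a n) = act X a (average X n)"
  using average_apply N.act_in average_integrand_act M.act_pr[OF average_integrand_LHom] by simp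

definition lifted_integrand :: "'o \<Rightarrow> 'o \<Rightarrow> ('c \<Rightarrow> 'n) \<Rightarrow> 'c \<Rightarrow> 'c \<Rightarrow> 'm" where
  "lifted_integrand X Y g f =
     (\<Sum>(ai, ai')\<leftarrow>coev sA. M.hom_act X Y ai (s_comp X Y (N.hom_act X Y (gamma X ai' f) g)))"

context
  fixes X Y g
  assumes g: "g \<in> LHom sC sN (C X Y) (N Y)"
begin

lemma lifted_integrand_lin:
  "lin_on sC (fscale sM) (C X X) (LHom sC sM (C X Y) (M Y)) (lifted_integrand X Y g)"
  unfolding lifted_integrand_def
proof (rule lin_on_sum_list[OF vector_space_fscale[OF M.vector_space_M] M.LHom_M(1,2)])
  fix ai ai' assume "(ai, ai') \<in> set (coev sA)"
  then have "lin_on sC sA (C X X) UNIV (gamma X ai')"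
    using M.gamma_lin by fastforce
  then show "lin_on sC (fscale sM) (C X X) (LHom sC sM (C X Y) (M Y))
      (\<lambda>f. M.hom_act X Y ai (s_comp X Y (N.hom_act X Y (gamma X ai' f) g)))"
    by (rule lin_on_comp[OF lin_on_comp[OF lin_on_comp[OF _ N.hom_act_lin_a[OF g]] s_comp_lin]
          M.hom_act_lin_g])
qed

lemma average_integrand_pr':
  assumes f: "f \<in> C X X"
  shows "average_integrand X (pr' X Y g) f = pr X Y (lifted_integrand X Y g f)"
proof -
  have "act X ai (s X (act' X (gamma X ai' f) (pr' X Y g))) =
        pr X Y (M.hom_act X Y ai (s_comp X Y (N.hom_act X Y (gamma X ai' f) g)))" for ai ai'
    using N.act_pr[OF g] s_pr[OF N.hom_act_LHom[OF g]]
      M.act_pr[OF s_comp_LHom[OF N.hom_act_LHom[OF g]]] by simp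
  then show ?thesis
    using M.pr_sum_list[of "coev sA" "\<lambda>p. M.hom_act X Y (fst p) (s_comp X Y (N.hom_act X Y (gamma X (snd p) f) g))"]
      M.hom_act_LHom[OF s_comp_LHom[OF N.hom_act_LHom[OF g]]]
    by (simp add: average_integrand_apply[OF f] lifted_integrand_def case_prod_unfold)
qed

lemma hom_act_s_comp_apply:
  assumes f1: "f1 \<in> C X Y"
  shows "M.hom_act X Y b0 (s_comp X Y (N.hom_act X Y d0 g)) f1 =
    (\<Sum>(b, h')\<leftarrow>psi X Y f1 b0. \<Sum>(d, h)\<leftarrow>psi X Y h' d0. act Y b (s Y (act' Y d (g h))))"
  unfolding M.hom_act_def restrict0_in[OF f1]
proof (rule sum_list_map_cong, clarify)
  fix b h' assume "(b, h') \<in> set (psi X Y f1 b0)"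
  then have h': "h' \<in> C X Y" using M.psi_set[OF f1] by fastforce
  have "s Y (\<Sum>(d, h)\<leftarrow>psi X Y h' d0. act' Y d (g h)) = (\<Sum>(d, h)\<leftarrow>psi X Y h' d0. s Y (act' Y d (g h)))"
    using s_sum_list[of "psi X Y h' d0" "\<lambda>r. act' Y (fst r) (g (snd r))" Y]
      N.act_in LHom_in[OF g] M.psi_set[OF h'] by (simp add: case_prod_unfold)
  moreover have "act Y b (\<Sum>(d, h)\<leftarrow>psi X Y h' d0. s Y (act' Y d (g h))) =
      (\<Sum>(d, h)\<leftarrow>psi X Y h' d0. act Y b (s Y (act' Y d (g h))))"
    using M.act_sum_list_m[of "psi X Y h' d0" "\<lambda>r. s Y (act' Y (fst r) (g (snd r)))" Y b]
      s_in N.act_in LHom_in[OF g] M.psi_set[OF h'] by (simp add: case_prod_unfold)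
  ultimately show "act Y b (s_comp X Y (N.hom_act X Y d0 g) h') =
      (\<Sum>(d, h)\<leftarrow>psi X Y h' d0. act Y b (s Y (act' Y d (g h))))"
    using h' unfolding s_comp_def N.hom_act_def by simp
qed

lemma delta_sum_lifted_integrand:
  assumes f: "f \<in> C X Y"
  shows "(\<Sum>(f1, f2)\<leftarrow>delta X X Y f. lifted_integrand X Y g f2 f1) =
    (\<Sum>(ai, ai')\<leftarrow>coev sA. \<Sum>(f1, f2)\<leftarrow>delta X Y Y f. act Y ai (s Y (act' Y (gamma Y ai' f1) (g f2))))"
proof -
  define T where "T b d h = act Y b (s Y (act' Y d (g h)))" for b d h
  have gw: "w \<in> C X Y \<Longrightarrow> g w \<in> N Y" for w using LHom_in[OF g] .
  have aw: "w \<in> C X Y \<Longrightarrow> act' Y v (g w) \<in> N Y" for w v using N.act_in[OF gw] .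
  have sw: "w \<in> C X Y \<Longrightarrow> s Y (act' Y v (g w)) \<in> M Y" for w v using s_in[OF aw] .
  have T3: "\<forall>u\<in>UNIV. \<forall>v\<in>UNIV. \<forall>w\<in>C X Y. \<forall>w'\<in>C X Y. T u v (w + w') = T u v w + T u v w'"
    "\<forall>u\<in>UNIV. \<forall>v\<in>UNIV. \<forall>w\<in>C X Y. \<forall>c. T u v (sC c w) = sM c (T u v w)"
    unfolding T_def using LHom_add[OF g] LHom_scale[OF g] N.act_add_m[OF gw gw] N.act_scale_m[OF gw]
      s_add[OF aw aw] s_scale[OF aw] M.act_add_m[OF sw sw] M.act_scale_m[OF sw]
    by simp_all
  have T2: "\<forall>u\<in>UNIV. \<forall>v\<in>UNIV. \<forall>v'\<in>UNIV. \<forall>w\<in>C X Y. T u (v + v') w = T u v w + T u v' w"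
    "\<forall>u\<in>UNIV. \<forall>v\<in>UNIV. \<forall>w\<in>C X Y. \<forall>c. T u (sA c v) w = sM c (T u v w)"
    unfolding T_def using N.act_add_a[OF gw] N.act_scale_a[OF gw] s_add[OF aw aw] s_scale[OF aw]
      M.act_add_m[OF sw sw] M.act_scale_m[OF sw]
    by simp_all
  have T1: "\<forall>u\<in>UNIV. \<forall>u'\<in>UNIV. \<forall>v\<in>UNIV. \<forall>w\<in>C X Y. T (u + u') v w = T u v w + T u' v w"
    "\<forall>u\<in>UNIV. \<forall>v\<in>UNIV. \<forall>w\<in>C X Y. \<forall>c. T (sA c u) v w = sM c (T u v w)"
    unfolding T_def using M.act_add_a[OF sw] M.act_scale_a[OF sw] by simp_all
  note T_sum_eq = teq3_sum_list_eq[OF _ M.vector_space_M T3 T2 T1]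
  have "(\<Sum>(f1, f2)\<leftarrow>delta X X Y f. lifted_integrand X Y g f2 f1) =
        (\<Sum>(f1, f2)\<leftarrow>delta X X Y f. \<Sum>(ai, ai')\<leftarrow>coev sA. \<Sum>(b, h')\<leftarrow>psi X Y f1 ai.
            \<Sum>(d, h)\<leftarrow>psi X Y h' (gamma X ai' f2). T b d h)"
    using M.delta_set[OF f] unfolding T_def lifted_integrand_def
    by (force simp: sum_list_fun_apply hom_act_s_comp_apply case_prod_unfold intro!: sum_list_map_cong)
  also have "\<dots> = (\<Sum>(b, d, h)\<leftarrow>[(b, d, h). (f1, f2) \<leftarrow> delta X X Y f, (ai, ai') \<leftarrow> coev sA,
                      (b, g) \<leftarrow> psi X Y f1 ai, (d, h) \<leftarrow> psi X Y g (gamma X ai' f2)]. T b d h)"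
    by (simp add: case_prod_unfold comp_def map_concat sum_list_concat)
  also have "\<dots> = (\<Sum>(b, d, h)\<leftarrow>[(ai, gamma Y ai' f1, f2). (ai, ai') \<leftarrow> coev sA, (f1, f2) \<leftarrow> delta X Y Y f]. T b d h)"
    by (rule T_sum_eq[OF M.cointegral_comult[OF f]])
  also have "\<dots> = (\<Sum>(ai, ai')\<leftarrow>coev sA. \<Sum>(f1, f2)\<leftarrow>delta X Y Y f. T ai (gamma Y ai' f1) f2)"
    by (simp add: case_prod_unfold comp_def map_concat sum_list_concat)
  finally show ?thesis unfolding T_def .
qed

lemma delta_sum_average_integrand:
  assumes f: "f \<in> C X Y"
  shows "(\<Sum>(f1, f2)\<leftarrow>delta X Y Y f. average_integrand Y (g f2) f1) =
    (\<Sum>(ai, ai')\<leftarrow>coev sA. \<Sum>(f1, f2)\<leftarrow>delta X Y Y f. act Y ai (s Y (act' Y (gamma Y ai' f1) (g f2))))"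
proof -
  have "(\<Sum>(f1, f2)\<leftarrow>delta X Y Y f. average_integrand Y (g f2) f1) =
        (\<Sum>(f1, f2)\<leftarrow>delta X Y Y f. \<Sum>(ai, ai')\<leftarrow>coev sA. act Y ai (s Y (act' Y (gamma Y ai' f1) (g f2))))"
    using M.delta_set[OF f] by (force simp: average_integrand_apply intro!: sum_list_map_cong)
  then show ?thesis
    using sum_list_swap[where f="\<lambda>p q. act Y (fst q) (s Y (act' Y (gamma Y (snd q) (fst p)) (g (snd p))))"
        and xs="delta X Y Y f" and ys="coev sA"]
    by (simp add: case_prod_unfold)
qed

lemma average_pr': "average X (pr' X Y g) = pr X Y (restrict0 (C X Y) (\<lambda>f. average Y (g f)))"
proof -
  have K_LHom: "restrict0 (C X Y) (\<lambda>f. average_integrand Y (g f))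
      \<in> LHom sC (fscale sM) (C X Y) (LHom sC sM (C Y Y) (M Y))"
    by (rule LHom_restrict0[OF lin_on_comp[OF LHom_lin[OF g] average_integrand_lin] M.C_add M.C_scale])
  have "average X (pr' X Y g) = pr X X (restrict0 (C X X) (\<lambda>f. pr X Y (lifted_integrand X Y g f)))"
    using average_apply[OF N.pr_in[OF g]] average_integrand_pr'
    by (simp add: average_integrand_def cong: restrict0_cong)
  also have "\<dots> = pr X Y (restrict0 (C X Y)
      (\<lambda>f. \<Sum>(f1, f2)\<leftarrow>delta X X Y f. restrict0 (C X X) (lifted_integrand X Y g) f2 f1))"
    using M.pr_assoc[OF LHom_restrict0[OF lifted_integrand_lin M.C_add M.C_scale]] M.delta_set
    by (simp cong: restrict0_cong)
  also have "\<dots> = pr X Y (restrict0 (C X Y)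
      (\<lambda>f. \<Sum>(f1, f2)\<leftarrow>delta X Y Y f. restrict0 (C X Y) (\<lambda>f. average_integrand Y (g f)) f2 f1))"
  proof (intro arg_cong[where f="pr X Y"] restrict0_cong)
    fix f assume f: "f \<in> C X Y"
    have "(\<Sum>(f1, f2)\<leftarrow>delta X X Y f. restrict0 (C X X) (lifted_integrand X Y g) f2 f1) =
        (\<Sum>(f1, f2)\<leftarrow>delta X X Y f. lifted_integrand X Y g f2 f1)"
      by (intro sum_list_map_cong) (fastforce dest: M.delta_set[OF f])
    moreover have "(\<Sum>(f1, f2)\<leftarrow>delta X Y Y f. restrict0 (C X Y) (\<lambda>f. average_integrand Y (g f)) f2 f1) =
        (\<Sum>(f1, f2)\<leftarrow>delta X Y Y f. average_integrand Y (g f2) f1)"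
      by (intro sum_list_map_cong) (fastforce dest: M.delta_set[OF f])
    ultimately show "(\<Sum>(f1, f2)\<leftarrow>delta X X Y f. restrict0 (C X X) (lifted_integrand X Y g) f2 f1) =
        (\<Sum>(f1, f2)\<leftarrow>delta X Y Y f. restrict0 (C X Y) (\<lambda>f. average_integrand Y (g f)) f2 f1)"
      using delta_sum_lifted_integrand[OF f] delta_sum_average_integrand[OF f] by simp
  qed
  also have "\<dots> = pr X Y (restrict0 (C X Y) (\<lambda>f. pr Y Y (average_integrand Y (g f))))"
    using M.pr_assoc[OF K_LHom] by (simp cong: restrict0_cong)
  also have "\<dots> = pr X Y (restrict0 (C X Y) (\<lambda>f. average Y (g f)))"
    using average_apply LHom_in[OF g] by (simp cong: restrict0_cong)
  finally show ?thesis .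
qed

end

lemma average_entwined_morphism: "entwined_morphism sC C sN N pr' act' sM M pr act average"
  unfolding entwined_morphism_def ctr_morphism_def
  using average_LHom average_pr' average_act by auto

context
  fixes phi :: "'o \<Rightarrow> 'm \<Rightarrow> 'n"
  assumes phi: "entwined_morphism sC C sM M pr act sN N pr' act' phi"
begin

lemma average_section:
  assumes right_inverse: "\<forall>X. \<forall>n\<in>N X. phi X (s X n) = n"
  shows "\<forall>X. \<forall>n\<in>N X. phi X (average X n) = n"
proof (intro allI ballI)
  fix X n assume n: "n \<in> N X"
  have "phi X (average_integrand X n f) = sN (eps X f) n" if f: "f \<in> C X X" for f
  proof -
    have "phi X (average_integrand X n f) =
        (\<Sum>(ai, ai')\<leftarrow>coev sA. phi X (act X ai (s X (act' X (gamma X ai' f) n))))"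
      using M.LHom_sum_list[OF entwined_morphismD(1)[OF phi],
          of "coev sA" "\<lambda>p. act X (fst p) (s X (act' X (gamma X (snd p) f) n))"]
        M.act_in s_in N.act_in n
      by (simp add: average_integrand_apply[OF f] case_prod_unfold)
    also have "\<dots> = (\<Sum>(ai, ai')\<leftarrow>coev sA. act' X ai (act' X (gamma X ai' f) n))"
      using entwined_morphismD(3)[OF phi] s_in N.act_in[OF n] right_inverse
      by (simp add: case_prod_unfold)
    also have "\<dots> = sN (eps X f) n" by (rule N.act_cointegral[OF n f])
    finally show ?thesis .
  qed
  then show "phi X (average X n) = n"
    using average_apply[OF n] entwined_morphismD(2)[OF phi average_integrand_LHom[OF n]]
      N.pr_counit[OF n]
    by (simp cong: restrict0_cong)
qed

lemma average_retraction:
  assumes left_inverse: "\<forall>X. \<forall>m\<in>M X. s X (phi X m) = m"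
  shows "\<forall>X. \<forall>m\<in>M X. average X (phi X m) = m"
proof (intro allI ballI)
  fix X m assume m: "m \<in> M X"
  have "average_integrand X (phi X m) = restrict0 (C X X) (\<lambda>f. sM (eps X f) m)"
    unfolding average_integrand_def
  proof (rule restrict0_cong)
    fix f assume f: "f \<in> C X X"
    have "(\<Sum>(ai, ai')\<leftarrow>coev sA. act X ai (s X (act' X (gamma X ai' f) (phi X m)))) =
          (\<Sum>(ai, ai')\<leftarrow>coev sA. act X ai (act X (gamma X ai' f) m))"
      using entwined_morphismD(3)[OF phi m, symmetric] left_inverse M.act_in[OF m]
      by (simp add: case_prod_unfold)
    also have "\<dots> = sM (eps X f) m" by (rule M.act_cointegral[OF m f])
    finally show "(\<Sum>(ai, ai')\<leftarrow>coev sA. act X ai (s X (act' X (gamma X ai' f) (phi X m)))) =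
        sM (eps X f) m" .
  qed
  then show "average X (phi X m) = m"
    using average_apply LHom_in[OF entwined_morphismD(1)[OF phi] m] M.pr_counit[OF m] by simp
qed

end

end

theorem proposition7p4:
  fixes sC :: "'k::field \<Rightarrow> 'c::ab_group_add \<Rightarrow> 'c"
    and C :: "'o \<Rightarrow> 'o \<Rightarrow> 'c set"
    and delta :: "'o \<Rightarrow> 'o \<Rightarrow> 'o \<Rightarrow> 'c \<Rightarrow> ('c \<times> 'c) list"
    and eps :: "'o \<Rightarrow> 'c \<Rightarrow> 'k"
    and sA :: "'k \<Rightarrow> 'a::ring_1 \<Rightarrow> 'a"
    and psi :: "'o \<Rightarrow> 'o \<Rightarrow> 'c \<Rightarrow> 'a \<Rightarrow> ('a \<times> 'c) list"
    and gamma :: "'o \<Rightarrow> ('a \<Rightarrow> 'k) \<Rightarrow> 'c \<Rightarrow> 'a"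
    and sM :: "'k \<Rightarrow> 'm::ab_group_add \<Rightarrow> 'm" and M :: "'o \<Rightarrow> 'm set"
    and pr :: "'o \<Rightarrow> 'o \<Rightarrow> ('c \<Rightarrow> 'm) \<Rightarrow> 'm" and act :: "'o \<Rightarrow> 'a \<Rightarrow> 'm \<Rightarrow> 'm"
    and sN :: "'k \<Rightarrow> 'n::ab_group_add \<Rightarrow> 'n" and N :: "'o \<Rightarrow> 'n set"
    and pr' :: "'o \<Rightarrow> 'o \<Rightarrow> ('c \<Rightarrow> 'n) \<Rightarrow> 'n" and act' :: "'o \<Rightarrow> 'a \<Rightarrow> 'n \<Rightarrow> 'n"
    and phi :: "'o \<Rightarrow> 'm \<Rightarrow> 'n"
  assumes ent: "entwining sC C delta eps sA psi"
    and fd: "findim sA"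
    and coint: "normalized_cointegral sC C delta eps sA psi gamma"
    and M: "entwined_contramodule sC C delta eps sA psi sM M pr act"
    and N: "entwined_contramodule sC C delta eps sA psi sN N pr' act'"
    and phi: "entwined_morphism sC C sM M pr act sN N pr' act' phi"
  shows "((\<exists>s. entwined_morphism sC C sN N pr' act' sM M pr act s \<and>
              (\<forall>X. \<forall>n\<in>N X. phi X (s X n) = n))
          \<longleftrightarrow> (\<exists>s. ctr_morphism sC C sN N pr' sM M pr s \<and>
              (\<forall>X. \<forall>n\<in>N X. phi X (s X n) = n)))
       \<and> ((\<exists>r. entwined_morphism sC C sN N pr' act' sM M pr act r \<and>
              (\<forall>X. \<forall>m\<in>M X. r X (phi X m) = m))
          \<longleftrightarrow> (\<exists>r. ctr_morphism sC C sN N pr' sM M pr r \<and>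
              (\<forall>X. \<forall>m\<in>M X. r X (phi X m) = m)))"
proof -
  have averaging: "cointegral_averaging sC C delta eps sA psi gamma sM M pr act sN N pr' act' s"
    if "ctr_morphism sC C sN N pr' sM M pr s" for s
    using that ent fd coint M N
    by (simp add: cointegral_averaging_def cointegral_averaging_axioms_def entwined_ctr_def
        entwined_ctr_axioms_def entwining_cointegral_def)
  have entwined_section: "\<exists>t. entwined_morphism sC C sN N pr' act' sM M pr act t \<and>
      (\<forall>X. \<forall>n\<in>N X. phi X (t X n) = n)"
    if "ctr_morphism sC C sN N pr' sM M pr s" "\<forall>X. \<forall>n\<in>N X. phi X (s X n) = n" for s
  proof -
    interpret cointegral_averaging sC C delta eps sA psi gamma sM M pr act sN N pr' act' s
      by (rule averaging[OF that(1)])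
    show ?thesis using average_entwined_morphism average_section[OF phi that(2)] by blast
  qed
  have entwined_retraction: "\<exists>t. entwined_morphism sC C sN N pr' act' sM M pr act t \<and>
      (\<forall>X. \<forall>m\<in>M X. t X (phi X m) = m)"
    if "ctr_morphism sC C sN N pr' sM M pr s" "\<forall>X. \<forall>m\<in>M X. s X (phi X m) = m" for s
  proof -
    interpret cointegral_averaging sC C delta eps sA psi gamma sM M pr act sN N pr' act' s
      by (rule averaging[OF that(1)])
    show ?thesis using average_entwined_morphism average_retraction[OF phi that(2)] by blast
  qed
  show ?thesis
    using entwined_section entwined_retraction unfolding entwined_morphism_def by blast
qed

end
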